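(* Let $G=(\mathcal{V},\mathcal{D})$ be an undirected graph with $\mathcal{V}=\{1,\dots,n\}$, and let $M_G$ be the latent conditional model associated with $G$ as described in the context, with $\alpha=\sum_{v\in\mathcal{V}}2^{\deg(v)}$. If $G$ has a clique of size $c$, then there is a labeling $\mathbf{y}\in\{E,N\}^n$ with $P(\mathbf{y})\geq c/\alpha$.
   Context: The model $M_G$: sequence length $m=n=|\mathcal{V}|$; label set $\mathcal{Y}=\{E,N\}$; latent variables $\mathcal{H}(E)=\{E^1,\dots,E^n\}$, $\mathcal{H}(N)=\{N^1,\dots,N^n\}$, $\mathcal{H}=\mathcal{H}(E)\cup\mathcal{H}(N)$. For each $i\in\mathcal{V}$ the layer $L_i$ is the set of latent-labelings $\mathbf{h}=(h_1,\dots,h_n)$ such that $h_k\in\{E^i,N^i\}$ for all $k$, $h_i=E^i$, and for $k\neq i$, $h_k=E^i$ is allowed only if $\{k,i\}\in\mathcal{D}$ (if $\{k,i\}\in\mathcal{D}$ both $E^i$ and $N^i$ are allowed at position $k$; otherwise only $N^i$). A latent-labeling is valid if it lies in some layer $L_i$; there are exactly $\alpha=\sum_{v\in\mathcal{V}}2^{\deg(v)}$ valid latent-labelings. The node and edge scores of $M_G$ are chosen so that $P(\mathbf{h})=1/\alpha$ for every valid latent-labeling and $P(\mathbf{h})=0$ otherwise. The probability of a labeling $\mathbf{y}\in\{E,N\}^n$ is $P(\mathbf{y})=\sum_{\mathbf{h}:\,h_j\in\mathcal{H}(y_j)\ \forall j}P(\mathbf{h})$. Here $\deg(v)$ is the degree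 of $v$ in $G$. *)

theory Defs
  imports Complex_Main "HOL-Library.FuncSet"
begin

definition simple_graph :: "nat \<Rightarrow> nat set set \<Rightarrow> bool" where
  "simple_graph n D \<longleftrightarrow> (\<forall>e\<in>D. \<exists>u v. e = {u, v} \<and> u \<in> {1..n} \<and> v \<in> {1..n} \<and> u \<noteq> v)"

definition deg :: "nat \<Rightarrow> nat set set \<Rightarrow> nat \<Rightarrow> nat" where
  "deg n D v = card {u \<in> {1..n}. {u, v} \<in> D}"

definition is_clique :: "nat \<Rightarrow> nat set set \<Rightarrow> nat set \<Rightarrow> bool" where
  "is_clique n D K \<longleftrightarrow> K \<subseteq> {1..n} \<and> (\<forall>u\<in>K. \<forall>v\<in>K. u \<noteq> v \<longrightarrow> {u, v} \<in> D)"

text \<open>Labels E, N; latent variable E^i is (E, i), N^i is (N, i).\<close>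
datatype label = E | N

type_synonym latent = "label \<times> nat"

definition latents :: "nat \<Rightarrow> latent set" where
  "latents n = UNIV \<times> {1..n}"

definition latents_of :: "nat \<Rightarrow> label \<Rightarrow> latent set" where
  "latents_of n l = {l} \<times> {1..n}"

definition latent_labelings :: "nat \<Rightarrow> (nat \<Rightarrow> latent) set" where
  "latent_labelings n = PiE {1..n} (\<lambda>_. latents n)"

definition labelings :: "nat \<Rightarrow> (nat \<Rightarrow> label) set" where
  "labelings n = PiE {1..n} (\<lambda>_. UNIV)"

definition layer :: "nat \<Rightarrow> nat set set \<Rightarrow> nat \<Rightarrow> (nat \<Rightarrow> latent) set" where
  "layer n D i = {h \<in> latent_labelings n.
      (\<forall>k\<in>{1..n}. h k \<in> {(E, i), (N, i)}) \<and> h i = (E, i) \<and>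
      (\<forall>k\<in>{1..n}. k \<noteq> i \<and> h k = (E, i) \<longrightarrow> {k, i} \<in> D)}"

definition valid :: "nat \<Rightarrow> nat set set \<Rightarrow> (nat \<Rightarrow> latent) \<Rightarrow> bool" where
  "valid n D h \<longleftrightarrow> (\<exists>i\<in>{1..n}. h \<in> layer n D i)"

definition alpha :: "nat \<Rightarrow> nat set set \<Rightarrow> nat" where
  "alpha n D = (\<Sum>v\<in>{1..n}. 2 ^ deg n D v)"

definition P_latent :: "nat \<Rightarrow> nat set set \<Rightarrow> (nat \<Rightarrow> latent) \<Rightarrow> real" where
  "P_latent n D h = (if valid n D h then 1 / real (alpha n D) else 0)"

definition P_label :: "nat \<Rightarrow> nat set set \<Rightarrow> (nat \<Rightarrow> label) \<Rightarrow> real" where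
  "P_label n D y = (\<Sum>h\<in>{h \<in> latent_labelings n. \<forall>j\<in>{1..n}. h j \<in> latents_of n (y j)}.
                      P_latent n D h)"

end

theory Submission
  imports Defs
begin

text \<open>Every vertex \<open>i\<close> of a clique \<open>K\<close> gives a valid latent-labeling in the layer \<open>L\<^sub>i\<close>:
  put \<open>E\<^sup>i\<close> exactly on the positions of \<open>K\<close> and \<open>N\<^sup>i\<close> elsewhere, which is allowed because every
  other vertex of \<open>K\<close> is adjacent to \<open>i\<close>. These \<open>|K|\<close> latent-labelings are pairwise distinct,
  each has probability \<open>1/\<alpha>\<close>, and all of them are compatible with the labeling that is \<open>E\<close> on
  \<open>K\<close> and \<open>N\<close> elsewhere.\<close>

definition compatible :: "nat \<Rightarrow> (nat \<Rightarrow> label) \<Rightarrow> (nat \<Rightarrow> latent) set" where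
  "compatible n y = {h \<in> latent_labelings n. \<forall>j\<in>{1..n}. h j \<in> latents_of n (y j)}"

definition clique_labeling :: "nat \<Rightarrow> nat set \<Rightarrow> nat \<Rightarrow> label" where
  "clique_labeling n K = restrict (\<lambda>k. if k \<in> K then E else N) {1..n}"

definition clique_latent_labeling :: "nat \<Rightarrow> nat set \<Rightarrow> nat \<Rightarrow> nat \<Rightarrow> latent" where
  "clique_latent_labeling n K i = restrict (\<lambda>k. (if k \<in> K then E else N, i)) {1..n}"

lemma finite_latents: "finite (latents n)"
proof -
  have "(UNIV :: label set) = {E, N}"
    using label.exhaust by auto
  then have "finite (UNIV :: label set)"
    by (metis finite.emptyI finite.insertI)
  then show ?thesis
    unfolding latents_def by (simp add: finite_SigmaI)
qed

lemma finite_compatible: "finite (compatible n y)"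
  unfolding compatible_def latent_labelings_def
  using finite_PiE[of "{1..n}" "\<lambda>_. latents n"] finite_latents by auto

lemma P_latent_nonneg: "0 \<le> P_latent n D h"
  unfolding P_latent_def by simp

lemma sum_P_latent_le_P_label:
  assumes "A \<subseteq> compatible n y"
  shows "(\<Sum>h\<in>A. P_latent n D h) \<le> P_label n D y"
proof -
  have "(\<Sum>h\<in>A. P_latent n D h) \<le> (\<Sum>h\<in>compatible n y. P_latent n D h)"
    using assms finite_compatible P_latent_nonneg by (intro sum_mono2) auto
  then show ?thesis
    unfolding P_label_def compatible_def .
qed

lemma clique_labeling_in_labelings: "clique_labeling n K \<in> labelings n"
  unfolding clique_labeling_def labelings_def by simp

lemma clique_latent_labeling_compatible:
  assumes "i \<in> {1..n}"
  shows "clique_latent_labeling n K i \<in> compatible n (clique_labeling n K)"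
  using assms
  unfolding compatible_def latent_labelings_def latents_def latents_of_def
    clique_latent_labeling_def clique_labeling_def
  by auto

lemma clique_latent_labeling_in_layer:
  assumes "is_clique n D K" and "i \<in> K"
  shows "clique_latent_labeling n K i \<in> layer n D i"
proof -
  have "i \<in> {1..n}" and "\<forall>k\<in>K. k \<noteq> i \<longrightarrow> {k, i} \<in> D"
    using assms unfolding is_clique_def by auto
  then show ?thesis
    using assms(2)
    unfolding layer_def latent_labelings_def latents_def clique_latent_labeling_def
    by auto
qed

lemma P_latent_clique_latent_labeling:
  assumes "is_clique n D K" and "i \<in> K"
  shows "P_latent n D (clique_latent_labeling n K i) = 1 / real (alpha n D)"
proof -
  have "i \<in> {1..n}"
    using assms unfolding is_clique_def by auto
  with clique_latent_labeling_in_layer[OF assms] show ?thesis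
    unfolding P_latent_def valid_def by auto
qed

lemma inj_on_clique_latent_labeling:
  assumes "K \<subseteq> {1..n}"
  shows "inj_on (clique_latent_labeling n K) K"
proof
  fix a b
  assume "a \<in> K" "b \<in> K" and "clique_latent_labeling n K a = clique_latent_labeling n K b"
  then have "clique_latent_labeling n K a a = clique_latent_labeling n K b a"
    by simp
  with \<open>a \<in> K\<close> assms show "a = b"
    unfolding clique_latent_labeling_def by auto
qed

theorem lemma2:
  fixes n c :: nat and D :: "nat set set" and K :: "nat set"
  assumes "simple_graph n D"
    and "is_clique n D K" and "card K = c"
  shows "\<exists>y\<in>labelings n. P_label n D y \<ge> real c / real (alpha n D)"
proof
  let ?h = "clique_latent_labeling n K"
  have K: "K \<subseteq> {1..n}"
    using assms(2) unfolding is_clique_def by simp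
  have "real c / real (alpha n D) = (\<Sum>i\<in>K. P_latent n D (?h i))"
    using P_latent_clique_latent_labeling[OF assms(2)] assms(3) by simp
  also have "\<dots> = (\<Sum>h\<in>?h ` K. P_latent n D h)"
    by (simp add: sum.reindex[OF inj_on_clique_latent_labeling[OF K]])
  also have "\<dots> \<le> P_label n D (clique_labeling n K)"
    using K clique_latent_labeling_compatible by (intro sum_P_latent_le_P_label) auto
  finally show "P_label n D (clique_labeling n K) \<ge> real c / real (alpha n D)" .
qed (rule clique_labeling_in_labelings)

end
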